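(* For every integer $n\ge 3$, the polytope $\operatorname{conv}\phi_n$ is not 3-neighborly; that is, there exist three vertices of $\operatorname{conv}\phi_n$ whose convex hull is not a face of $\operatorname{conv}\phi_n$. (For $n=3$, the sum of the three elements of $\phi_3$ corresponding to the three cyclic permutations (including the identity) equals the sum of the three elements corresponding to the three transpositions.)
   Context: For $n\ge 3$, $\phi_n$ is the set of $\binom{n}{2}\times\binom{n}{2}$ permutation matrices of the edges of the complete graph $K_n$ induced by permutations of its vertices: for a permutation $\sigma$ of $[n]$, the associated vector $\bm{z}\in\{0,1\}^{\binom{n}{2}\times\binom{n}{2}}$ has coordinates $z_{ijkl}$, $i,j,k,l\in[n]$, $i<j$, $k<l$, with $z_{ijkl}=1$ iff $\{\sigma(i),\sigma(j)\}=\{k,l\}$, and $0$ otherwise. All elements of $\phi_n$ are vertices of $\operatorname{conv}\phi_n$. A polytope is $k$-neighborly if every set of at most $k$ of its vertices is the vertex set of a face. *)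

theory Defs
  imports "HOL-Analysis.Analysis" "HOL-Analysis.Finite_Function_Topology" "HOL-Combinatorics.Permutations"
begin

text \<open>Coordinates are indexed by quadruples (i,j,k,l) of naturals; only those with
  1 \<le> i < j \<le> n and 1 \<le> k < l \<le> n can be nonzero.\<close>

definition edge_perm_vec :: "nat \<Rightarrow> (nat \<Rightarrow> nat) \<Rightarrow> ((nat \<times> nat \<times> nat \<times> nat), real) poly_mapping" where
  "edge_perm_vec n \<sigma> = Abs_poly_mapping (\<lambda>(i,j,k,l).
     if i \<in> {1..n} \<and> j \<in> {1..n} \<and> k \<in> {1..n} \<and> l \<in> {1..n} \<and> i < j \<and> k < l
        \<and> {\<sigma> i, \<sigma> j} = {k, l} then 1 else 0)"

definition phi :: "nat \<Rightarrow> (((nat \<times> nat \<times> nat \<times> nat), real) poly_mapping) set" where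
  "phi n = {edge_perm_vec n \<sigma> | \<sigma>. \<sigma> permutes {1..n}}"

definition neighborly :: "nat \<Rightarrow> 'a::real_vector set \<Rightarrow> bool" where
  "neighborly k P \<longleftrightarrow>
     (\<forall>S. S \<subseteq> {v. v extreme_point_of P} \<and> finite S \<and> card S \<le> k \<longrightarrow>
        (\<exists>F. F face_of P \<and> {v. v extreme_point_of F} = S))"

end

theory Submission imports Defs begin

text \<open>Every element of \<open>\<phi>\<^sub>n\<close> is a 0/1 vector, hence a vertex of \<open>conv \<phi>\<^sub>n\<close>. The three
  rotations \<open>x\<^sub>1, x\<^sub>2, x\<^sub>3\<close> of \<open>{1,2,3}\<close> and the three transpositions \<open>y\<^sub>1, y\<^sub>2, y\<^sub>3\<close> of
  \<open>{1,2,3}\<close> give vectors with equal barycenters, since each pair \<open>{i,j}\<close> is sent to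
  each pair \<open>{k,l}\<close> equally often by both triples. A face containing \<open>x\<^sub>1, x\<^sub>2, x\<^sub>3\<close>
  contains their barycenter, which lies in the relative interior of
  \<open>conv {y\<^sub>1, y\<^sub>2, y\<^sub>3}\<close>; so the face also contains the vertex \<open>y\<^sub>1\<close>, and its vertex set
  is not \<open>{x\<^sub>1, x\<^sub>2, x\<^sub>3}\<close>.\<close>

lemma lookup_scaleR_poly_mapping:
  "Poly_Mapping.lookup (r *\<^sub>R x) i = r *\<^sub>R Poly_Mapping.lookup x i"
proof -
  have "finite {i. r *\<^sub>R Poly_Mapping.lookup x i \<noteq> 0}"
    by (rule finite_subset[of _ "Poly_Mapping.keys x"]) (auto simp: in_keys_iff)
  then show ?thesis
    by (simp add: scaleR_poly_mapping_def lookup_Abs_poly_mapping)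
qed

lemma extreme_point_of_convex_hull_strict_max:
  fixes f :: "'a::real_vector \<Rightarrow> real"
  assumes "linear f" "finite S" "v \<in> S" "\<And>w. w \<in> S - {v} \<Longrightarrow> f w < f v"
  shows "v extreme_point_of convex hull S"
proof -
  have "convex hull (S - {v}) \<subseteq> f -` {..<f v}"
    using assms(1,4) by (intro hull_minimal convex_linear_vimage) auto
  then have "v \<notin> convex hull (S - {v})"
    by auto
  then have "v extreme_point_of convex hull (insert v (S - {v}))"
    using assms(2) by (intro extreme_point_of_convex_hull_insert) auto
  then show ?thesis
    using assms(3) by (simp add: insert_absorb)
qed

text \<open>The vertex \<open>v\<close> is the unique maximiser of \<open>x \<mapsto> \<Sum>\<^sub>q (2 v\<^sub>q - 1) x\<^sub>q\<close> over 0/1 vectors,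
  since \<open>(2 v\<^sub>q - 1)(w\<^sub>q - v\<^sub>q) = -(w\<^sub>q - v\<^sub>q)\<^sup>2\<close> when \<open>v\<^sub>q, w\<^sub>q \<in> {0,1}\<close>.\<close>

lemma extreme_point_of_convex_hull_01:
  fixes S :: "('a, real) poly_mapping set"
  assumes "finite S" "v \<in> S" "\<And>x q. x \<in> S \<Longrightarrow> Poly_Mapping.lookup x q \<in> {0, 1}"
  shows "v extreme_point_of convex hull S"
proof -
  define K where "K = (\<Union>x\<in>S. Poly_Mapping.keys x)"
  define f where "f x = (\<Sum>q\<in>K. (2 * Poly_Mapping.lookup v q - 1) * Poly_Mapping.lookup x q)" for x
  have "finite K"
    using assms(1) by (simp add: K_def)
  have "linear f"
  proof (rule linearI)
    show "f (x + y) = f x + f y" for x y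
      by (simp add: f_def lookup_add distrib_left sum.distrib)
    show "f (r *\<^sub>R x) = r *\<^sub>R f x" for r x
      by (simp add: f_def lookup_scaleR_poly_mapping sum_distrib_left mult.left_commute)
  qed
  moreover have "f w < f v" if w: "w \<in> S - {v}" for w
  proof -
    have "w \<noteq> v"
      using w by simp
    then obtain q0 where q0: "Poly_Mapping.lookup w q0 \<noteq> Poly_Mapping.lookup v q0"
      by (metis poly_mapping_eqI)
    then have "q0 \<in> K"
      using w assms(2) unfolding K_def by (cases "Poly_Mapping.lookup v q0 = 0") (auto simp: in_keys_iff)
    have sq: "(2 * Poly_Mapping.lookup v q - 1) * (Poly_Mapping.lookup w q - Poly_Mapping.lookup v q)
        = - (Poly_Mapping.lookup w q - Poly_Mapping.lookup v q)\<^sup>2" for q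
    proof -
      have "Poly_Mapping.lookup v q \<in> {0, 1}" "Poly_Mapping.lookup w q \<in> {0, 1}"
        using assms(2,3) w by auto
      then show ?thesis
        by (auto simp: power2_eq_square)
    qed
    have "f w - f v
        = (\<Sum>q\<in>K. (2 * Poly_Mapping.lookup v q - 1) * (Poly_Mapping.lookup w q - Poly_Mapping.lookup v q))"
      by (simp add: f_def sum_subtractf[symmetric] right_diff_distrib)
    also have "\<dots> = - (\<Sum>q\<in>K. (Poly_Mapping.lookup w q - Poly_Mapping.lookup v q)\<^sup>2)"
      by (simp add: sq sum_negf)
    also have "\<dots> \<le> - (Poly_Mapping.lookup w q0 - Poly_Mapping.lookup v q0)\<^sup>2"
      using \<open>finite K\<close> \<open>q0 \<in> K\<close>
      by (simp add: member_le_sum[where f = "\<lambda>q. (Poly_Mapping.lookup w q - Poly_Mapping.lookup v q)\<^sup>2"])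
    also have "\<dots> < 0"
      using q0 by simp
    finally show ?thesis
      by simp
  qed
  ultimately show ?thesis
    using assms(1,2) by (intro extreme_point_of_convex_hull_strict_max[of f])
qed

lemma convex_barycenter3_mem:
  assumes "convex F" "a \<in> F" "b \<in> F" "c \<in> F"
  shows "(1/3 :: real) *\<^sub>R (a + b + c) \<in> F"
proof -
  have "(1/3 :: real) *\<^sub>R (a + b + c) \<in> convex hull {a, b, c}"
    unfolding convex_hull_3
    by (rule CollectI, rule exI[of _ "1/3"], rule exI[of _ "1/3"], rule exI[of _ "1/3"])
      (simp add: scaleR_add_right)
  moreover have "convex hull {a, b, c} \<subseteq> F"
    using assms by (intro hull_minimal) auto
  ultimately show ?thesis
    by blast
qed

text \<open>The barycenter of \<open>a, b, c\<close> lies in the open segment from \<open>a\<close> to the midpoint of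
  \<open>b, c\<close>, unless it equals \<open>a\<close>.\<close>

lemma face_of_barycenter3_imp_mem:
  assumes "F face_of P" "convex P" "a \<in> P" "b \<in> P" "c \<in> P"
    and "(1/3 :: real) *\<^sub>R (a + b + c) \<in> F"
  shows "a \<in> F"
proof -
  define w where "w = (1/2 :: real) *\<^sub>R (b + c)"
  have "w \<in> P"
    using assms(2,4,5) unfolding w_def convex_def by (simp add: scaleR_add_right)
  have bary: "(1/3 :: real) *\<^sub>R (a + b + c) = (1 - 2/3) *\<^sub>R a + (2/3 :: real) *\<^sub>R w"
    by (simp add: w_def scaleR_add_right)
  show ?thesis
  proof (cases "a = w")
    case True
    then show ?thesis
      using assms(6) bary by (simp flip: scaleR_add_left)
  next
    case False
    then have "(1/3 :: real) *\<^sub>R (a + b + c) \<in> open_segment a w"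
      unfolding bary in_segment by (intro conjI exI[of _ "2/3"]) auto
    then show ?thesis
      using face_ofD[OF assms(1) _ assms(3) \<open>w \<in> P\<close> assms(6)] by blast
  qed
qed

lemma not_neighborly_3_if_equal_barycenters:
  fixes V :: "'a::real_vector set"
  assumes vertices: "\<And>v. v \<in> V \<Longrightarrow> v extreme_point_of convex hull V"
    and x: "x1 \<in> V" "x2 \<in> V" "x3 \<in> V" and y: "y1 \<in> V" "y2 \<in> V" "y3 \<in> V"
    and sums: "x1 + x2 + x3 = y1 + y2 + y3" and y1: "y1 \<notin> {x1, x2, x3}"
  shows "\<not> neighborly 3 (convex hull V)"
proof
  assume "neighborly 3 (convex hull V)"
  moreover have "{x1, x2, x3} \<subseteq> {v. v extreme_point_of convex hull V}"
    using x vertices by blast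
  moreover have "finite {x1, x2, x3}" "card {x1, x2, x3} \<le> 3"
    by (auto simp: card_insert_if)
  ultimately obtain F where F: "F face_of convex hull V"
    and ext_F: "{v. v extreme_point_of F} = {x1, x2, x3}"
    unfolding neighborly_def by meson
  have "x1 \<in> F" "x2 \<in> F" "x3 \<in> F"
    using ext_F extreme_point_of_def by blast+
  then have "(1/3 :: real) *\<^sub>R (y1 + y2 + y3) \<in> F"
    unfolding sums[symmetric] by (rule convex_barycenter3_mem[OF face_of_imp_convex[OF F]])
  then have "y1 \<in> F"
    by (rule face_of_barycenter3_imp_mem[OF F convex_convex_hull hull_inc hull_inc hull_inc, OF y])
  then have "y1 extreme_point_of F"
    using extreme_point_of_face[OF F] vertices[OF y(1)] by blast
  with ext_F y1 show False
    by blast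
qed

lemma lookup_edge_perm_vec:
  "Poly_Mapping.lookup (edge_perm_vec n \<sigma>) (i, j, k, l) =
    (if i \<in> {1..n} \<and> j \<in> {1..n} \<and> k \<in> {1..n} \<and> l \<in> {1..n} \<and> i < j \<and> k < l
        \<and> {\<sigma> i, \<sigma> j} = {k, l} then 1 else 0)"
proof -
  have "finite {q. (\<lambda>(i, j, k, l). if i \<in> {1..n} \<and> j \<in> {1..n} \<and> k \<in> {1..n} \<and> l \<in> {1..n}
      \<and> i < j \<and> k < l \<and> {\<sigma> i, \<sigma> j} = {k, l} then 1 else (0 :: real)) q \<noteq> 0}"
    by (rule finite_subset[of _ "{1..n} \<times> {1..n} \<times> {1..n} \<times> {1..n}"]) (auto split: if_splits)
  then show ?thesis
    by (simp add: edge_perm_vec_def)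
qed

lemma lookup_phi_01: "x \<in> phi n \<Longrightarrow> Poly_Mapping.lookup x q \<in> {0, 1}"
  by (cases q) (auto simp: phi_def lookup_edge_perm_vec)

lemma finite_phi: "finite (phi n)"
proof -
  have "phi n = edge_perm_vec n ` {\<sigma>. \<sigma> permutes {1..n}}"
    by (auto simp: phi_def)
  then show ?thesis
    by (simp add: finite_permutations)
qed

lemma extreme_point_of_convex_hull_phi:
  "x \<in> phi n \<Longrightarrow> x extreme_point_of convex hull (phi n)"
  by (metis extreme_point_of_convex_hull_01 finite_phi lookup_phi_01)

lemma edge_perm_vec_eqD:
  assumes "edge_perm_vec n \<sigma> = edge_perm_vec n \<tau>" "\<sigma> permutes {1..n}"
    and "i \<in> {1..n}" "j \<in> {1..n}" "i < j"
  shows "{\<sigma> i, \<sigma> j} = {\<tau> i, \<tau> j}"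
proof -
  have "\<sigma> i \<noteq> \<sigma> j" "\<sigma> i \<in> {1..n}" "\<sigma> j \<in> {1..n}"
    using assms(2-5) permutes_in_image[OF assms(2)] by (auto simp: permutes_inj inj_eq)
  then have "Poly_Mapping.lookup (edge_perm_vec n \<sigma>) (i, j, min (\<sigma> i) (\<sigma> j), max (\<sigma> i) (\<sigma> j)) = 1"
    using assms(3-5) by (auto simp: lookup_edge_perm_vec min_def max_def)
  then have "Poly_Mapping.lookup (edge_perm_vec n \<tau>) (i, j, min (\<sigma> i) (\<sigma> j), max (\<sigma> i) (\<sigma> j)) = 1"
    using assms(1) by simp
  then show ?thesis
    by (auto simp: lookup_edge_perm_vec min_def max_def split: if_splits)
qed

lemma edge_perm_vec_rotations_eq_transpositions:
  "edge_perm_vec n id + edge_perm_vec n (Transposition.transpose 1 2 \<circ> Transposition.transpose 2 3)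
     + edge_perm_vec n (Transposition.transpose 2 3 \<circ> Transposition.transpose 1 2)
   = edge_perm_vec n (Transposition.transpose 1 2) + edge_perm_vec n (Transposition.transpose 1 3)
     + edge_perm_vec n (Transposition.transpose 2 3)" (is "?rotations = ?transpositions")
proof (rule poly_mapping_eqI)
  fix q :: "nat \<times> nat \<times> nat \<times> nat"
  obtain i j k l where q: "q = (i, j, k, l)"
    by (cases q) auto
  have "i = 0 \<or> i = 1 \<or> i = 2 \<or> i = 3 \<or> 3 < i" "j = 0 \<or> j = 1 \<or> j = 2 \<or> j = 3 \<or> 3 < j"
    by linarith+
  then show "Poly_Mapping.lookup ?rotations q = Poly_Mapping.lookup ?transpositions q"
    by (elim disjE)
      (simp_all add: q lookup_add lookup_edge_perm_vec Transposition.transpose_def insert_commute)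
qed

lemma edge_perm_vec_transpose_notin_rotations:
  assumes "n \<ge> 3"
  shows "edge_perm_vec n (Transposition.transpose 1 2) \<notin>
    {edge_perm_vec n id, edge_perm_vec n (Transposition.transpose 1 2 \<circ> Transposition.transpose 2 3),
     edge_perm_vec n (Transposition.transpose 2 3 \<circ> Transposition.transpose 1 2)}"
proof -
  have "edge_perm_vec n (Transposition.transpose 1 2) \<noteq> edge_perm_vec n \<tau>"
    if "{Transposition.transpose 1 2 i, Transposition.transpose 1 2 j} \<noteq> {\<tau> i, \<tau> j}"
      "i \<in> {1..n}" "j \<in> {1..n}" "i < j" for \<tau> i j
  proof
    assume "edge_perm_vec n (Transposition.transpose 1 2) = edge_perm_vec n \<tau>"
    then have "{Transposition.transpose 1 2 i, Transposition.transpose 1 2 j} = {\<tau> i, \<tau> j}"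
      by (rule edge_perm_vec_eqD) (use assms that in \<open>auto intro: permutes_swap_id\<close>)
    with that(1) show False ..
  qed
  from this[where \<tau> = id and i = 1 and j = 3]
    this[where \<tau> = "Transposition.transpose 1 2 \<circ> Transposition.transpose 2 3" and i = 1 and j = 2]
    this[where \<tau> = "Transposition.transpose 2 3 \<circ> Transposition.transpose 1 2" and i = 1 and j = 2]
  show ?thesis
    using assms by (auto simp: Transposition.transpose_def doubleton_eq_iff)
qed

theorem mainTheorem4:
  fixes n :: nat
  assumes "n \<ge> 3"
  shows "\<not> neighborly 3 (convex hull (phi n))"
proof -
  have transpose_permutes: "Transposition.transpose a b permutes {1..n}"
    if "a \<in> {1, 2, 3}" "b \<in> {1, 2, 3}" for a b :: nat
    using that assms by (intro permutes_swap_id) auto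
  have in_phi: "edge_perm_vec n \<sigma> \<in> phi n" if "\<sigma> permutes {1..n}" for \<sigma>
    using that unfolding phi_def by blast
  show ?thesis
    by (rule not_neighborly_3_if_equal_barycenters[OF extreme_point_of_convex_hull_phi
          in_phi in_phi in_phi in_phi in_phi in_phi
          edge_perm_vec_rotations_eq_transpositions edge_perm_vec_transpose_notin_rotations[OF assms]])
      (intro permutes_id permutes_compose transpose_permutes | simp)+
qed

end
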